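(* Let $\mathcal M$ be a non-empty compact, locally connected Hausdorff space, $\vec\varphi:\mathcal M\to\mathbb R^k$ continuous, and $\vec y=(y_1,\dots,y_k)\in\mathbb R^k$. If $P,Q\in\mathcal M$ are $\langle\vec\varphi\preceq(y_1+\varepsilon,\dots,y_k+\varepsilon)\rangle$-connected for every $\varepsilon>0$, then $P$ and $Q$ are $\langle\vec\varphi\preceq\vec y\rangle$-connected.
   Context: For $\vec t\in\mathbb R^k$, $\mathcal M\langle\vec\varphi\preceq\vec t\rangle=\{P\in\mathcal M:\varphi_i(P)\le t_i,\ i=1,\dots,k\}$. Two points $P,Q\in\mathcal M$ are $\langle\vec\varphi\preceq\vec t\rangle$-connected if some connected subset of $\mathcal M\langle\vec\varphi\preceq\vec t\rangle$ contains both $P$ and $Q$. *)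

theory Defs
  imports "HOL-Analysis.Analysis"
begin

definition sublevel :: "'a topology \<Rightarrow> ('a \<Rightarrow> real^'k) \<Rightarrow> real^'k \<Rightarrow> 'a set" where
  "sublevel M phi t = {P \<in> topspace M. \<forall>i. phi P $ i \<le> t $ i}"

definition sublevel_connected :: "'a topology \<Rightarrow> ('a \<Rightarrow> real^'k) \<Rightarrow> real^'k \<Rightarrow> 'a \<Rightarrow> 'a \<Rightarrow> bool" where
  "sublevel_connected M phi t P Q \<longleftrightarrow>
     (\<exists>C. connectedin M C \<and> C \<subseteq> sublevel M phi t \<and> P \<in> C \<and> Q \<in> C)"

end

theory Submission
  imports Defs
begin

text \<open>The sublevel sets for the levels \<open>y + 1/(n+1)\<close> are closed and decrease to the sublevel
  set for \<open>y\<close>. In a compact normal space the intersection of a decreasing sequence of closed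
  connected sets is connected: were it split by disjoint open sets \<open>U\<close> and \<open>V\<close>, compactness
  would put some member of the sequence inside \<open>U \<union> V\<close> and split it too. Applied to the
  connected components of \<open>P\<close> in the shrinking sublevel sets, this gives a connected set
  containing \<open>P\<close> and \<open>Q\<close> inside the sublevel set for \<open>y\<close>.\<close>

lemma compact_space_decseq_subset_open:
  fixes C :: "nat \<Rightarrow> 'a set"
  assumes "compact_space X" and clo: "\<And>n. closedin X (C n)" and dec: "decseq C"
    and W: "openin X W" "(\<Inter>n. C n) \<subseteq> W"
  obtains n where "C n \<subseteq> W"
proof -
  have "closedin X (C n - W)" for n
    using clo W(1) by (rule closedin_diff)
  moreover have "decseq (\<lambda>n. C n - W)"
    using dec unfolding decseq_def monotone_on_def by blast
  moreover have "(\<Inter>n. C n - W) = {}"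
    using W(2) by blast
  ultimately have "\<not> (\<forall>n. C n - W \<noteq> {})"
    using compact_space_imp_nest[OF \<open>compact_space X\<close>] by metis
  then show thesis
    using that by blast
qed

lemma connectedin_Inter_decseq:
  fixes C :: "nat \<Rightarrow> 'a set"
  assumes compact: "compact_space X" and normal: "normal_space X"
    and clo: "\<And>n. closedin X (C n)" and con: "\<And>n. connectedin X (C n)" and dec: "decseq C"
  shows "connectedin X (\<Inter>n. C n)"
proof -
  define K where "K = (\<Inter>n. C n)"
  have clK: "closedin X K"
    unfolding K_def using clo by (intro closedin_Inter) auto
  have KC: "K \<subseteq> C n" for n
    unfolding K_def by blast
  have "connectedin X K"
    unfolding connectedin_closedin
  proof (intro conjI notI)
    show "K \<subseteq> topspace X"
      using closedin_subset[OF clK] .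
  next
    assume "\<exists>E1 E2. closedin X E1 \<and> closedin X E2 \<and> K \<subseteq> E1 \<union> E2 \<and>
              E1 \<inter> E2 \<inter> K = {} \<and> E1 \<inter> K \<noteq> {} \<and> E2 \<inter> K \<noteq> {}"
    then obtain E1 E2 where E: "closedin X E1" "closedin X E2" "K \<subseteq> E1 \<union> E2"
      "E1 \<inter> E2 \<inter> K = {}" "E1 \<inter> K \<noteq> {}" "E2 \<inter> K \<noteq> {}"
      by blast
    have "closedin X (E1 \<inter> K)" "closedin X (E2 \<inter> K)"
      using E(1,2) clK by (simp_all add: closedin_Int)
    moreover have "disjnt (E1 \<inter> K) (E2 \<inter> K)"
      using E(4) unfolding disjnt_def by blast
    ultimately obtain U V where UV: "openin X U" "openin X V" "E1 \<inter> K \<subseteq> U" "E2 \<inter> K \<subseteq> V"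
      "disjnt U V"
      using normal unfolding normal_space_def by meson
    have "(\<Inter>n. C n) \<subseteq> U \<union> V"
      using E(3) UV(3,4) unfolding K_def by blast
    with UV(1,2) obtain n where "C n \<subseteq> U \<union> V"
      by (metis compact_space_decseq_subset_open[OF compact clo dec] openin_Un)
    moreover have "U \<inter> V \<inter> C n = {}"
      using UV(5) unfolding disjnt_def by blast
    moreover have "U \<inter> C n \<noteq> {}" "V \<inter> C n \<noteq> {}"
      using UV(3,4) E(5,6) KC[of n] by blast+
    ultimately show False
      using con[of n] UV(1,2) unfolding connectedin by blast
  qed
  then show ?thesis
    unfolding K_def .
qed

lemma connected_component_of_Inter_decseq:
  fixes S :: "nat \<Rightarrow> 'a set"
  assumes "compact_space X" "normal_space X"
    and clo: "\<And>n. closedin X (S n)" and dec: "decseq S"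
    and comp: "\<And>n. connected_component_of (subtopology X (S n)) x y"
  shows "connected_component_of (subtopology X (\<Inter>n. S n)) x y"
proof -
  define K where "K n = connected_component_of_set (subtopology X (S n)) x" for n
  have "closedin X (K n)" for n
    unfolding K_def using closedin_trans_full[OF closedin_connected_component_of clo] .
  moreover have conK: "connectedin (subtopology X (S n)) (K n)" for n
    unfolding K_def by (rule connectedin_connected_component_of)
  then have "connectedin X (K n)" for n
    by (simp add: connectedin_subtopology)
  moreover have xyK: "x \<in> K n" "y \<in> K n" for n
    using comp[of n] connected_component_of_refl connected_component_in_topspace
    unfolding K_def by fastforce+
  moreover have "decseq K"
  proof (rule decseq_SucI)
    fix n
    have "connectedin (subtopology X (S n)) (K (Suc n))"
      using conK[of "Suc n"] decseq_SucD[OF dec, of n] by (auto simp: connectedin_subtopology)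
    then show "K (Suc n) \<subseteq> K n"
      unfolding K_def by (rule connected_component_of_maximal) (use xyK in \<open>simp add: K_def\<close>)
  qed
  ultimately have "connectedin X (\<Inter>n. K n)"
    using connectedin_Inter_decseq[OF assms(1,2)] by blast
  moreover have "(\<Inter>n. K n) \<subseteq> (\<Inter>n. S n)"
    using conK by (auto simp: connectedin_subtopology)
  ultimately show ?thesis
    unfolding connected_component_of_def connectedin_subtopology using xyK by blast
qed

lemma sublevel_connected_iff_connected_component_of:
  "sublevel_connected M phi t P Q \<longleftrightarrow>
     connected_component_of (subtopology M (sublevel M phi t)) P Q"
  by (simp add: sublevel_connected_def connected_component_of_def connectedin_subtopology)

lemma closedin_sublevel:
  assumes "continuous_map M euclidean phi"
  shows "closedin M (sublevel M phi t)"
proof -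
  have "sublevel M phi t = {x \<in> topspace M. phi x \<in> {z. \<forall>i. z $ i \<le> t $ i}}"
    by (simp add: sublevel_def)
  then show ?thesis
    using closedin_continuous_map_preimage[OF assms, of "{z. \<forall>i. z $ i \<le> t $ i}"]
    by (simp add: closed_interval_left_cart)
qed

lemma sublevel_mono:
  assumes "\<And>i. t $ i \<le> s $ i"
  shows "sublevel M phi t \<subseteq> sublevel M phi s"
  unfolding sublevel_def using assms order_trans by blast

lemma Inter_sublevel_shifted:
  "(\<Inter>n. sublevel M phi (\<chi> i. t $ i + 1 / real (Suc n))) = sublevel M phi t"
proof (intro equalityI subsetI)
  fix x
  assume x: "x \<in> (\<Inter>n. sublevel M phi (\<chi> i. t $ i + 1 / real (Suc n)))"
  then have below: "phi x $ i \<le> t $ i + 1 / real (Suc n)" for i n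
    by (simp add: sublevel_def)
  have "phi x $ i \<le> t $ i" for i
  proof (rule field_le_epsilon)
    fix e :: real
    assume "e > 0"
    then obtain n where "1 / real (Suc n) < e"
      by (rule nat_approx_posE)
    with below[of i n] show "phi x $ i \<le> t $ i + e"
      by linarith
  qed
  with x show "x \<in> sublevel M phi t"
    by (simp add: sublevel_def)
next
  fix x
  assume "x \<in> sublevel M phi t"
  moreover have "sublevel M phi t \<subseteq> sublevel M phi (\<chi> i. t $ i + 1 / real (Suc n))" for n
    by (rule sublevel_mono) simp
  ultimately show "x \<in> (\<Inter>n. sublevel M phi (\<chi> i. t $ i + 1 / real (Suc n)))"
    by blast
qed

theorem lemma5p1:
  fixes M :: "'a topology" and phi :: "'a \<Rightarrow> real^'k" and y :: "real^'k" and P Q :: 'a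
  assumes "topspace M \<noteq> {}"
    and "compact_space M" and "locally_connected_space M" and "Hausdorff_space M"
    and "continuous_map M euclidean phi"
    and "P \<in> topspace M" and "Q \<in> topspace M"
    and "\<And>\<epsilon>. \<epsilon> > 0 \<Longrightarrow> sublevel_connected M phi (\<chi> i. y $ i + \<epsilon>) P Q"
  shows "sublevel_connected M phi y P Q"
proof -
  define S where "S n = sublevel M phi (\<chi> i. y $ i + 1 / real (Suc n))" for n
  have "normal_space M"
    using assms(2,4) compact_Hausdorff_or_regular_imp_normal_space by blast
  moreover have "closedin M (S n)" for n
    unfolding S_def using assms(5) by (rule closedin_sublevel)
  moreover have "decseq S"
    unfolding S_def by (rule decseq_SucI, rule sublevel_mono) (simp add: frac_le)
  moreover have "connected_component_of (subtopology M (S n)) P Q" for n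
    using assms(8)[of "1 / real (Suc n)"]
    by (simp add: S_def sublevel_connected_iff_connected_component_of)
  ultimately have "connected_component_of (subtopology M (\<Inter>n. S n)) P Q"
    using connected_component_of_Inter_decseq[OF assms(2)] by blast
  then show ?thesis
    unfolding S_def Inter_sublevel_shifted sublevel_connected_iff_connected_component_of .
qed

end
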